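(* Let $k$ be a field and let $H$ be a numerical semigroup minimally generated by $n<a_2<\cdots<a_n$ with $n\ge 3$ (so the number of minimal generators equals the smallest generator $n$). Then $k[[H]]$ has minimal canonical conductor if and only if $a_n=a_{n-1}+1$.
   Context: A numerical semigroup is an additive submonoid $H\subseteq\mathbb{N}$ with $\mathbb{N}\setminus H$ finite. $k[[H]]$ is the subring of $k[[t]]$ of power series supported on $H$; it is a one-dimensional analytically unramified local domain with integral closure $\overline{R}=k[[t]]$ and it is singular when $H\ne\mathbb{N}$. A one-dimensional singular analytically unramified local domain $R$ with fraction field $Q(R)$ and canonical ideal $\omega$ has minimal canonical conductor if $b(\omega)=\mathfrak{c}(R)$, where $B(\omega)=\bigcup_{m\ge0}(\omega^m:\omega^m)$ with $\omega^m:\omega^m=\{x\in Q(R): x\omega^m\subseteq\omega^m\}$, $b(\omega)=\{x\in B(\omega): xB(\omega)\subseteq R\}$, and $\mathfrak{c}(R)=\{x\in\overline{R}: x\overline{R}\subseteq R\}$; equivalently, $B(\omega)=\overline{R}$. *)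

theory Defs
  imports "HOL-Computational_Algebra.Formal_Laurent_Series"
begin

definition numerical_semigroup :: "nat set \<Rightarrow> bool" where
  "numerical_semigroup H \<longleftrightarrow> 0 \<in> H \<and> (\<forall>x\<in>H. \<forall>y\<in>H. x + y \<in> H) \<and> finite (UNIV - H)"

definition min_gens :: "nat set \<Rightarrow> nat set" where
  "min_gens H = {a \<in> H. a \<noteq> 0 \<and>
     \<not> (\<exists>x\<in>H. \<exists>y\<in>H. x \<noteq> 0 \<and> y \<noteq> 0 \<and> a = x + y)}"

text \<open>Power series t-expansions supported on H (viewed inside Laurent series).\<close>
definition sgring :: "nat set \<Rightarrow> 'a::field fls set" where
  "sgring H = {f. \<forall>i. fls_nth f i \<noteq> 0 \<longrightarrow> 0 \<le> i \<and> nat i \<in> H}"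

text \<open>k[[t]], the integral closure of k[[H]].\<close>
definition pow_series :: "'a::field fls set" where
  "pow_series = {f. \<forall>i<0. fls_nth f i = 0}"

definition frac_ideal :: "'a::field fls set \<Rightarrow> 'a fls set \<Rightarrow> bool" where
  "frac_ideal R M \<longleftrightarrow> 0 \<in> M \<and> (\<forall>x\<in>M. \<forall>y\<in>M. x + y \<in> M) \<and>
     (\<forall>r\<in>R. \<forall>x\<in>M. r * x \<in> M) \<and> (\<exists>x\<in>M. x \<noteq> 0) \<and>
     (\<exists>d\<in>R. d \<noteq> 0 \<and> (\<forall>x\<in>M. d * x \<in> R))"

definition colon :: "'a::field fls set \<Rightarrow> 'a fls set \<Rightarrow> 'a fls set" where
  "colon I J = {x. \<forall>y\<in>J. x * y \<in> I}"

definition fideal_prod :: "'a::field fls set \<Rightarrow> 'a fls set \<Rightarrow> 'a fls set" where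
  "fideal_prod I J = {x. \<exists>(n::nat) f g. x = (\<Sum>i<n. f i * g i) \<and> (\<forall>i<n. f i \<in> I \<and> g i \<in> J)}"

fun ideal_pow :: "'a::field fls set \<Rightarrow> 'a fls set \<Rightarrow> nat \<Rightarrow> 'a fls set" where
  "ideal_pow R w 0 = R"
| "ideal_pow R w (Suc m) = fideal_prod (ideal_pow R w m) w"

definition canonical_ideal :: "'a::field fls set \<Rightarrow> 'a fls set \<Rightarrow> bool" where
  "canonical_ideal R w \<longleftrightarrow> frac_ideal R w \<and>
     (\<forall>I. frac_ideal R I \<longrightarrow> colon w (colon w I) = I)"

definition B_of :: "'a::field fls set \<Rightarrow> 'a fls set \<Rightarrow> 'a fls set" where
  "B_of R w = (\<Union>m. colon (ideal_pow R w m) (ideal_pow R w m))"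

definition b_of :: "'a::field fls set \<Rightarrow> 'a fls set \<Rightarrow> 'a fls set" where
  "b_of R w = {x \<in> B_of R w. \<forall>y\<in>B_of R w. x * y \<in> R}"

definition conductor :: "'a::field fls set \<Rightarrow> 'a fls set \<Rightarrow> 'a fls set" where
  "conductor R Rbar = {x \<in> Rbar. \<forall>y\<in>Rbar. x * y \<in> R}"

definition min_can_conductor :: "'a::field fls set \<Rightarrow> 'a fls set \<Rightarrow> bool" where
  "min_can_conductor R Rbar \<longleftrightarrow>
     (\<forall>w. canonical_ideal R w \<longrightarrow> b_of R w = conductor R Rbar)"

end

theory Submission
  imports Defs
begin

(* Write F = a n - n.  Because the multiplicity n equals the embedding dimension, the generators
   a 2, ..., a n form the Apery set of H with respect to n; hence F is the Frobenius number of H,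
   and F - 1 lies in H exactly when a n is not a (n - 1) + 1.  So it suffices to prove, for any
   numerical semigroup with Frobenius number F, that k[[H]] has minimal canonical conductor iff
   F - 1 is a gap.

   If F - 1 is in H, all powers of the standard canonical ideal K (series supported on the
   i with F - i not in H) lie in k[[t^2, t^3]], and so does B(K).  Multiplying by t^(F-1) maps
   k[[t^2, t^3]] into k[[H]], so t^(F-1) lies in b(K); it is not in the conductor because
   t^(F-1) * t = t^F.

   If F - 1 is a gap, let s be the least order in a canonical ideal w.  Duality w:(w:I) = I for
   I = k[[H \<union> {F..}]], properly contained in k[[H \<union> {F-1..}]], forces an element of order s + 1
   in w.  Products of the elements of orders s and s + 1 give w^m every order from m s to
   m s + m, so for m >= F the conductor bound makes w^m = t^(m s) k[[t]], whence B(w) = k[[t]]. *)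

unbundle fps_syntax

section \<open>Orders of Laurent series\<close>

lemma fls_shift_one_times_nth [simp]: "(fls_shift k 1 * f :: 'a::field fls) $$ i = f $$ (i + k)"
  by (simp add: fls_shifted_times_simps)

definition ord_ge :: "int \<Rightarrow> 'a::field fls set" where
  "ord_ge c = {x. \<forall>i<c. x $$ i = 0}"

lemma pow_series_eq_ord_ge: "pow_series = ord_ge 0"
  by (simp add: pow_series_def ord_ge_def)

lemma ord_ge_iff_subdegree: "x \<noteq> 0 \<Longrightarrow> x \<in> ord_ge c \<longleftrightarrow> c \<le> fls_subdegree x"
  unfolding ord_ge_def using fls_subdegree_geI fls_eq0_below_subdegree by fastforce

lemma zero_in_ord_ge [simp]: "0 \<in> ord_ge c"
  by (simp add: ord_ge_def)

lemma ord_ge_add: "x \<in> ord_ge c \<Longrightarrow> y \<in> ord_ge c \<Longrightarrow> x + y \<in> ord_ge c"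
  by (simp add: ord_ge_def)

lemma ord_ge_diff: "x \<in> ord_ge c \<Longrightarrow> y \<in> ord_ge c \<Longrightarrow> x - y \<in> ord_ge c"
  by (simp add: ord_ge_def)

lemma ord_ge_const_mult: "x \<in> ord_ge c \<Longrightarrow> fls_const k * x \<in> ord_ge c"
  by (simp add: ord_ge_def)

lemma ord_ge_antimono: "c \<le> d \<Longrightarrow> ord_ge d \<subseteq> ord_ge c"
  by (auto simp: ord_ge_def)

lemma ord_ge_succ: "x \<in> ord_ge c \<Longrightarrow> x $$ c = 0 \<Longrightarrow> x \<in> ord_ge (c + 1)"
  unfolding ord_ge_def by (auto simp: order.order_iff_strict zle_add1_eq_le[symmetric])

lemma ord_ge_mult: "x \<in> ord_ge c \<Longrightarrow> y \<in> ord_ge d \<Longrightarrow> x * y \<in> ord_ge (c + d)"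
  by (cases "x = 0 \<or> y = 0") (auto simp: ord_ge_iff_subdegree)

lemma fls_X_intpow_in_ord_ge: "fls_X_intpow c \<in> ord_ge c"
  by (simp add: ord_ge_def)

lemma divide_in_ord_ge:
  fixes x q :: "'a::field fls"
  assumes "x \<noteq> 0" "q \<in> ord_ge (fls_subdegree x + c)"
  shows "q / x \<in> ord_ge c"
proof (cases "q = 0")
  case False
  then have "q / x \<noteq> 0" "x * (q / x) = q" using assms(1) by auto
  then have "fls_subdegree q = fls_subdegree x + fls_subdegree (q / x)"
    using assms(1) by (metis fls_subdegree_mult)
  then show ?thesis using assms False \<open>q / x \<noteq> 0\<close> by (simp add: ord_ge_iff_subdegree)
qed simp

lemma ord_ge_eq_mult_image:
  fixes x :: "'a::field fls"
  assumes "x \<noteq> 0"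
  shows "ord_ge (fls_subdegree x + c) = (\<lambda>y. x * y) ` ord_ge c"
proof
  show "ord_ge (fls_subdegree x + c) \<subseteq> (\<lambda>y. x * y) ` ord_ge c"
    using divide_in_ord_ge[OF assms] assms by (auto intro: image_eqI[of _ _ "_ / x"])
  show "(\<lambda>y. x * y) ` ord_ge c \<subseteq> ord_ge (fls_subdegree x + c)"
    using ord_ge_mult[of x "fls_subdegree x"] ord_ge_iff_subdegree[OF assms] by auto
qed

lemma exists_min_subdegree:
  fixes w :: "'a::field fls set"
  assumes "w \<subseteq> ord_ge c" "x \<in> w" "x \<noteq> 0"
  obtains g where "g \<in> w" "g \<noteq> 0" "w \<subseteq> ord_ge (fls_subdegree g)"
proof -
  define P where "P j \<longleftrightarrow> (\<exists>x\<in>w. x \<noteq> 0 \<and> fls_subdegree x = c + int j)" for j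
  have lb: "c \<le> fls_subdegree y" if "y \<in> w" "y \<noteq> 0" for y
    using assms(1) that ord_ge_iff_subdegree by blast
  have "P (nat (fls_subdegree x - c))"
    unfolding P_def using assms(2,3) lb[OF assms(2,3)] by auto
  then have "P (LEAST j. P j)" by (rule LeastI)
  then obtain g where g: "g \<in> w" "g \<noteq> 0" "fls_subdegree g = c + int (LEAST j. P j)"
    unfolding P_def by blast
  have "fls_subdegree g \<le> fls_subdegree y" if "y \<in> w" "y \<noteq> 0" for y
  proof -
    have "P (nat (fls_subdegree y - c))" unfolding P_def using that lb[OF that] by auto
    then have "(LEAST j. P j) \<le> nat (fls_subdegree y - c)" by (rule Least_le)
    then show ?thesis using g(3) lb[OF that] by linarith
  qed
  then have "w \<subseteq> ord_ge (fls_subdegree g)"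
    by (metis ord_ge_iff_subdegree subsetI zero_in_ord_ge)
  with g that show ?thesis by blast
qed

definition fls_subspace :: "'a::field fls set \<Rightarrow> bool" where
  "fls_subspace I \<longleftrightarrow>
     0 \<in> I \<and> (\<forall>x\<in>I. \<forall>y\<in>I. x + y \<in> I) \<and> (\<forall>c x. x \<in> I \<longrightarrow> fls_const c * x \<in> I)"

lemma fls_subspace_add_const_mult:
  "fls_subspace I \<Longrightarrow> x \<in> I \<Longrightarrow> y \<in> I \<Longrightarrow> x + fls_const c * y \<in> I"
  unfolding fls_subspace_def by blast

lemma fls_subspace_diff_const_mult:
  assumes "fls_subspace I" "x \<in> I" "y \<in> I"
  shows "x - fls_const c * y \<in> I"
  using fls_subspace_add_const_mult[OF assms, of "- c"] by simp

lemma fls_subspace_Int_ord_ge: "fls_subspace I \<Longrightarrow> fls_subspace (I \<inter> ord_ge c)"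
  unfolding fls_subspace_def using ord_ge_add ord_ge_const_mult by auto

lemma ord_ge_subset_subspace:
  fixes J :: "'a::field fls set"
  assumes "fls_subspace J" "ord_ge (c + int N) \<subseteq> J"
    and "\<And>i. i < N \<Longrightarrow> \<exists>x\<in>J. x \<noteq> 0 \<and> fls_subdegree x = c + int i"
  shows "ord_ge c \<subseteq> J"
  using assms(2,3)
proof (induction N arbitrary: c)
  case (Suc N)
  have "ord_ge (c + 1) \<subseteq> J"
  proof (rule Suc.IH)
    show "ord_ge (c + 1 + int N) \<subseteq> J" using Suc.prems(1) by (simp add: add.assoc)
    show "\<exists>x\<in>J. x \<noteq> 0 \<and> fls_subdegree x = c + 1 + int i" if "i < N" for i
      using Suc.prems(2)[of "Suc i"] that by (simp add: add.assoc)
  qed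
  moreover obtain x where x: "x \<in> J" "x \<noteq> 0" "fls_subdegree x = c"
    using Suc.prems(2)[of 0] by auto
  ultimately show ?case
  proof (intro subsetI)
    fix q :: "'a fls" assume q: "q \<in> ord_ge c" and J1: "ord_ge (c + 1) \<subseteq> J"
    define q' where "q' = q - fls_const (q $$ c / x $$ c) * x"
    have "q' \<in> ord_ge c"
      unfolding q'_def using q x ord_ge_iff_subdegree by (blast intro: ord_ge_diff ord_ge_const_mult)
    moreover have "q' $$ c = 0" using nth_fls_subdegree_nonzero[OF x(2)] x(3) by (simp add: q'_def)
    ultimately have "q' \<in> J" using J1 ord_ge_succ by blast
    then have "q' + fls_const (q $$ c / x $$ c) * x \<in> J"
      using fls_subspace_add_const_mult[OF assms(1) _ x(1)] by blast
    then show "q \<in> J" by (simp add: q'_def)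
  qed
qed simp

lemma coeff_functional_eliminate_pivot:
  fixes f' p :: "'a::field fls"
  assumes "p $$ b \<noteq> 0"
  obtains f where "\<And>x. (f * x) $$ e = (f' * (x - fls_const (x $$ b / p $$ b) * p)) $$ e"
proof
  define c where "c = - (f' * p) $$ e / p $$ b"
  fix x :: "'a fls"
  have "((f' + fls_const c * fls_X_intpow (e - b)) * x) $$ e = (f' * x) $$ e + c * x $$ b"
    by (simp add: distrib_right mult.assoc)
  also have "\<dots> = (f' * x) $$ e - x $$ b / p $$ b * (f' * p) $$ e"
    using assms by (simp add: c_def field_simps)
  also have "\<dots> = (f' * (x - fls_const (x $$ b / p $$ b) * p)) $$ e"
    by (simp add: right_diff_distrib mult.left_commute[of f'])
  finally show "((f' + fls_const c * fls_X_intpow (e - b)) * x) $$ e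
    = (f' * (x - fls_const (x $$ b / p $$ b) * p)) $$ e" .
qed

lemma pivot_reduction:
  fixes I :: "'a::field fls set"
  assumes "fls_subspace I" "p \<in> I" "p \<in> ord_ge b" "p $$ b \<noteq> 0" "x \<in> ord_ge b"
  shows "x - fls_const (x $$ b / p $$ b) * p \<in> ord_ge (b + 1)"
    and "x - fls_const (x $$ b / p $$ b) * p \<in> I \<longleftrightarrow> x \<in> I"
proof -
  show "x - fls_const (x $$ b / p $$ b) * p \<in> ord_ge (b + 1)"
  proof (rule ord_ge_succ)
    show "x - fls_const (x $$ b / p $$ b) * p \<in> ord_ge b"
      using assms(3,5) by (blast intro: ord_ge_diff ord_ge_const_mult)
  qed (use assms(4) in simp)
  show "x - fls_const (x $$ b / p $$ b) * p \<in> I \<longleftrightarrow> x \<in> I"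
  proof
    assume "x - fls_const (x $$ b / p $$ b) * p \<in> I"
    then have "x - fls_const (x $$ b / p $$ b) * p + fls_const (x $$ b / p $$ b) * p \<in> I"
      by (rule fls_subspace_add_const_mult[OF assms(1) _ assms(2)])
    then show "x \<in> I" by simp
  qed (rule fls_subspace_diff_const_mult[OF assms(1) _ assms(2)])
qed

text \<open>Since \<open>I\<close> contains \<open>ord_ge (b + N)\<close>, membership only depends on the coefficients
  \<open>b, \<dots>, b + N - 1\<close>, and every linear functional of these is \<open>q \<mapsto> (f * q) $$ e\<close> for some \<open>f\<close>;
  the functional is built by Gaussian elimination on the lowest coefficient.\<close>

lemma exists_coeff_functional_separating:
  fixes I :: "'a::field fls set"
  assumes "fls_subspace I" "ord_ge (b + int N) \<subseteq> I" "I \<subseteq> ord_ge b" "g \<in> ord_ge b" "g \<notin> I"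
  shows "\<exists>f. (\<forall>q\<in>I. (f * q) $$ e = 0) \<and> (f * g) $$ e \<noteq> 0"
  using assms
proof (induction N arbitrary: b I g)
  case 0
  then show ?case by auto
next
  case (Suc N)
  have I_Suc: "ord_ge (b + 1 + int N) \<subseteq> I" using Suc.prems(2) by (simp add: add.assoc)
  show ?case
  proof (cases "\<exists>p\<in>I. p $$ b \<noteq> 0")
    case True
    then obtain p where p: "p \<in> I" "p $$ b \<noteq> 0" by blast
    define \<pi> where "\<pi> x = x - fls_const (x $$ b / p $$ b) * p" for x
    define I' where "I' = I \<inter> ord_ge (b + 1)"
    note reduction = pivot_reduction[OF Suc.prems(1) p(1) _ p(2), folded \<pi>_def]
    obtain f' where f': "\<forall>q\<in>I'. (f' * q) $$ e = 0" "(f' * \<pi> g) $$ e \<noteq> 0"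
    proof -
      have "fls_subspace I'" unfolding I'_def by (rule fls_subspace_Int_ord_ge[OF Suc.prems(1)])
      moreover have "ord_ge (b + 1 + int N) \<subseteq> I'"
        using I_Suc ord_ge_antimono[of "b + 1" "b + 1 + int N"] unfolding I'_def by auto
      moreover have "\<pi> g \<notin> I'" "\<pi> g \<in> ord_ge (b + 1)"
        using reduction p(1) Suc.prems(3-5) unfolding I'_def by blast+
      ultimately show thesis using Suc.IH[of I' "b + 1" "\<pi> g"] that unfolding I'_def by blast
    qed
    obtain f where f: "\<And>x. (f * x) $$ e = (f' * \<pi> x) $$ e"
      using coeff_functional_eliminate_pivot[OF p(2)] unfolding \<pi>_def by blast
    have "\<pi> q \<in> I'" if "q \<in> I" for q
      using reduction that p(1) Suc.prems(3) unfolding I'_def by blast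
    with f f' have "\<forall>q\<in>I. (f * q) $$ e = 0" by simp
    moreover have "(f * g) $$ e \<noteq> 0" using f f'(2) by simp
    ultimately show ?thesis by blast
  next
    case False
    then have I_succ: "I \<subseteq> ord_ge (b + 1)" using Suc.prems(3) ord_ge_succ by blast
    show ?thesis
    proof (cases "g $$ b = 0")
      case True
      then have "g \<in> ord_ge (b + 1)" using Suc.prems(4) by (rule ord_ge_succ[rotated])
      then show ?thesis using Suc.IH[OF Suc.prems(1) I_Suc I_succ _ Suc.prems(5)] by blast
    next
      case False
      with \<open>\<not> (\<exists>p\<in>I. p $$ b \<noteq> 0)\<close> show ?thesis
        by (intro exI[of _ "fls_X_intpow (e - b)"]) simp
    qed
  qed
qed

section \<open>Products, powers and colons of fractional ideals\<close>

lemma mult_in_fideal_prod: "x \<in> A \<Longrightarrow> y \<in> B \<Longrightarrow> x * y \<in> fideal_prod A B"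
  unfolding fideal_prod_def by (rule CollectI, rule exI[of _ 1]) auto

lemma fideal_prod_subset:
  assumes "0 \<in> S" "\<And>x y. x \<in> S \<Longrightarrow> y \<in> S \<Longrightarrow> x + y \<in> S"
    and "\<And>x y. x \<in> A \<Longrightarrow> y \<in> B \<Longrightarrow> x * y \<in> S"
  shows "fideal_prod A B \<subseteq> S"
proof
  fix z assume "z \<in> fideal_prod A B"
  then obtain n :: nat and f g where z: "z = (\<Sum>i<n. f i * g i)" "\<forall>i<n. f i \<in> A \<and> g i \<in> B"
    unfolding fideal_prod_def by blast
  have "(\<Sum>i<m. f i * g i) \<in> S" if "m \<le> n" for m
    using that by (induction m) (auto simp: assms z(2))
  with z(1) show "z \<in> S" by blast
qed

lemma fideal_prod_add_mult:
  assumes "z \<in> fideal_prod A B" "x \<in> A" "y \<in> B"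
  shows "z + x * y \<in> fideal_prod A B"
proof -
  obtain n :: nat and f g where z: "z = (\<Sum>i<n. f i * g i)" "\<forall>i<n. f i \<in> A \<and> g i \<in> B"
    using assms(1) unfolding fideal_prod_def by blast
  have "z + x * y = (\<Sum>i<Suc n. (f(n := x)) i * (g(n := y)) i)"
    unfolding z(1) by (auto intro: sum.cong)
  moreover have "\<forall>i<Suc n. (f(n := x)) i \<in> A \<and> (g(n := y)) i \<in> B"
    using z(2) assms(2,3) by (simp add: less_Suc_eq)
  ultimately show ?thesis unfolding fideal_prod_def by blast
qed

lemma fideal_prod_add:
  assumes "x \<in> fideal_prod A B" "y \<in> fideal_prod A B"
  shows "x + y \<in> fideal_prod A B"
proof -
  have "fideal_prod A B \<subseteq> {y. \<forall>x \<in> fideal_prod A B. x + y \<in> fideal_prod A B}"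
    by (rule fideal_prod_subset) (auto simp: add.assoc[symmetric] fideal_prod_add_mult)
  with assms show ?thesis by blast
qed

lemma zero_in_fideal_prod: "0 \<in> fideal_prod A B"
  unfolding fideal_prod_def by (rule CollectI, rule exI[of _ 0]) simp

lemma fideal_prod_left_mult:
  assumes "\<And>x. x \<in> A \<Longrightarrow> r * x \<in> A" "z \<in> fideal_prod A B"
  shows "r * z \<in> fideal_prod A B"
proof -
  have "fideal_prod A B \<subseteq> {z. r * z \<in> fideal_prod A B}"
    by (rule fideal_prod_subset)
      (auto simp: distrib_left zero_in_fideal_prod fideal_prod_add mult.assoc[symmetric]
        intro: mult_in_fideal_prod assms(1))
  with assms(2) show ?thesis by blast
qed

lemma colonI: "(\<And>y. y \<in> J \<Longrightarrow> x * y \<in> I) \<Longrightarrow> x \<in> colon I J"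
  unfolding colon_def by blast

lemma colonD: "x \<in> colon I J \<Longrightarrow> y \<in> J \<Longrightarrow> x * y \<in> I"
  unfolding colon_def by blast

lemma colon_antimono: "J1 \<subseteq> J2 \<Longrightarrow> colon I J2 \<subseteq> colon I J1"
  unfolding colon_def by blast

lemma colon_self_subset: "1 \<in> X \<Longrightarrow> colon X X \<subseteq> X"
  unfolding colon_def by force

lemma one_in_ideal_pow: "1 \<in> R \<Longrightarrow> 1 \<in> w \<Longrightarrow> 1 \<in> ideal_pow R w m"
  by (induction m) (auto dest: mult_in_fideal_prod[of 1 _ 1])

lemma ideal_pow_subset:
  assumes "R \<subseteq> S" "w \<subseteq> S" "0 \<in> S"
    and "\<And>x y. x \<in> S \<Longrightarrow> y \<in> S \<Longrightarrow> x + y \<in> S"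
    and "\<And>x y. x \<in> S \<Longrightarrow> y \<in> S \<Longrightarrow> x * y \<in> S"
  shows "ideal_pow R w m \<subseteq> S"
proof (induction m)
  case (Suc m)
  have "fideal_prod (ideal_pow R w m) w \<subseteq> S"
    by (rule fideal_prod_subset) (use Suc assms(2-5) in blast)+
  then show ?case by simp
qed (simp add: assms(1))

lemma B_of_subset:
  assumes "1 \<in> R" "1 \<in> w" "R \<subseteq> S" "w \<subseteq> S" "0 \<in> S"
    and "\<And>x y. x \<in> S \<Longrightarrow> y \<in> S \<Longrightarrow> x + y \<in> S"
    and "\<And>x y. x \<in> S \<Longrightarrow> y \<in> S \<Longrightarrow> x * y \<in> S"
  shows "B_of R w \<subseteq> S"
  unfolding B_of_def
  using colon_self_subset[OF one_in_ideal_pow[OF assms(1,2)]] ideal_pow_subset[OF assms(3-7)]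
  by blast

lemma subset_B_of:
  assumes "\<And>x y. x \<in> R \<Longrightarrow> y \<in> R \<Longrightarrow> x * y \<in> R"
  shows "R \<subseteq> B_of R w"
proof
  fix x assume "x \<in> R"
  then have "x \<in> colon (ideal_pow R w 0) (ideal_pow R w 0)" by (auto intro: colonI assms)
  then show "x \<in> B_of R w" unfolding B_of_def by blast
qed

lemma powers_in_ideal_pow:
  assumes "1 \<in> R" "x \<in> w" "y \<in> w" "j \<le> m"
  shows "x ^ (m - j) * y ^ j \<in> ideal_pow R w m"
  using assms(4)
proof (induction m arbitrary: j)
  case 0
  then show ?case using assms(1) by simp
next
  case (Suc m)
  show ?case
  proof (cases "j \<le> m")
    case True
    then have "x ^ (m - j) * y ^ j * x \<in> ideal_pow R w (Suc m)"
      using mult_in_fideal_prod[OF Suc.IH[OF True] assms(2)] by simp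
    with True show ?thesis by (simp add: Suc_diff_le algebra_simps)
  next
    case False
    with Suc.prems have "j = Suc m" by simp
    moreover have "x ^ (m - m) * y ^ m * y \<in> ideal_pow R w (Suc m)"
      using Suc.IH[of m] mult_in_fideal_prod assms(3) by simp
    ultimately show ?thesis by (simp add: algebra_simps)
  qed
qed

lemma ideal_pow_subset_ord_ge:
  assumes "R \<subseteq> ord_ge 0" "w \<subseteq> ord_ge s"
  shows "ideal_pow R w m \<subseteq> ord_ge (int m * s)"
proof (induction m)
  case (Suc m)
  have "fideal_prod (ideal_pow R w m) w \<subseteq> ord_ge (int m * s + s)"
    using Suc assms(2) by (intro fideal_prod_subset) (auto intro: ord_ge_add ord_ge_mult)
  then show ?case by (simp add: algebra_simps)
qed (simp add: assms(1))

section \<open>Semigroup rings\<close>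

lemma sgring_iff: "x \<in> sgring H \<longleftrightarrow> (\<forall>i. x $$ i \<noteq> 0 \<longrightarrow> 0 \<le> i \<and> nat i \<in> H)"
  by (simp add: sgring_def)

lemma sgring_subset_pow_series: "sgring H \<subseteq> ord_ge 0"
proof (intro subsetI, unfold ord_ge_def, intro CollectI allI impI)
  fix x :: "'a fls" and i :: int
  assume "x \<in> sgring H" "i < 0"
  then show "x $$ i = 0" unfolding sgring_iff by force
qed

lemma sgring_mono: "H \<subseteq> H' \<Longrightarrow> sgring H \<subseteq> sgring H'"
  unfolding sgring_def by blast

lemma zero_in_sgring: "0 \<in> sgring H"
  by (simp add: sgring_def)

lemma sgring_add:
  assumes "x \<in> sgring H" "y \<in> sgring H"
  shows "x + y \<in> sgring H"
  unfolding sgring_iff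
proof (intro allI impI)
  fix i assume "(x + y) $$ i \<noteq> 0"
  then have "x $$ i \<noteq> 0 \<or> y $$ i \<noteq> 0" by auto
  with assms show "0 \<le> i \<and> nat i \<in> H" unfolding sgring_iff by blast
qed

lemma fls_const_in_sgring: "0 \<in> H \<Longrightarrow> fls_const c \<in> sgring H"
  by (simp add: sgring_def)

lemma one_in_sgring: "0 \<in> H \<Longrightarrow> 1 \<in> sgring H"
  by (simp add: sgring_def)

lemma fls_X_intpow_in_sgring_iff: "(fls_X_intpow (int h) :: 'a::field fls) \<in> sgring H \<longleftrightarrow> h \<in> H"
proof
  assume "(fls_X_intpow (int h) :: 'a fls) \<in> sgring H"
  then have "(fls_X_intpow (int h) :: 'a fls) $$ int h \<noteq> 0 \<longrightarrow> nat (int h) \<in> H"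
    unfolding sgring_iff by blast
  then show "h \<in> H" by simp
qed (simp add: sgring_iff)

lemma sgring_mult:
  assumes add_mem: "\<And>x y. x \<in> H \<Longrightarrow> y \<in> H \<Longrightarrow> x + y \<in> H"
    and "x \<in> sgring H" "y \<in> sgring H"
  shows "x * y \<in> sgring H"
  unfolding sgring_iff
proof (intro allI impI)
  fix i assume "(x * y) $$ i \<noteq> 0"
  then obtain j where "x $$ j * y $$ (i - j) \<noteq> 0"
    unfolding fls_times_nth(2) using sum.not_neutral_contains_not_neutral by blast
  then have "x $$ j \<noteq> 0" "y $$ (i - j) \<noteq> 0" by auto
  then have "0 \<le> j" "nat j \<in> H" "0 \<le> i - j" "nat (i - j) \<in> H"
    using assms(2,3) unfolding sgring_iff by blast+
  moreover from this have "nat i = nat j + nat (i - j)" by (simp add: nat_add_distrib[symmetric])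
  ultimately show "0 \<le> i \<and> nat i \<in> H" using add_mem by simp
qed

lemma no_linear_term_add_closed: "x \<noteq> 1 \<Longrightarrow> y \<noteq> (1::nat) \<Longrightarrow> x + y \<noteq> 1"
  by arith

lemma add_closed_Un_atLeast:
  fixes H :: "nat set"
  assumes "\<And>x y. x \<in> H \<Longrightarrow> y \<in> H \<Longrightarrow> x + y \<in> H"
  shows "x \<in> H \<union> {c..} \<Longrightarrow> y \<in> H \<union> {c..} \<Longrightarrow> x + y \<in> H \<union> {c..}"
  using assms by (auto simp: trans_le_add1 trans_le_add2)

lemma ord_ge_subset_sgring_Un_atLeast: "ord_ge (int c) \<subseteq> sgring (H \<union> {c..})"
proof (intro subsetI, unfold sgring_iff, intro allI impI)
  fix x :: "'a fls" and i assume "x \<in> ord_ge (int c)" "x $$ i \<noteq> 0"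
  then have "\<not> i < int c" unfolding ord_ge_def by blast
  then show "0 \<le> i \<and> nat i \<in> H \<union> {c..}" by auto
qed

section \<open>Semigroups with Frobenius number F\<close>

locale frobenius =
  fixes H :: "nat set" and F :: nat
  assumes zero_mem: "0 \<in> H"
    and add_mem: "\<And>x y. x \<in> H \<Longrightarrow> y \<in> H \<Longrightarrow> x + y \<in> H"
    and frobenius_not_mem: "F \<notin> H"
    and mem_if_gt_frobenius: "\<And>y. F < y \<Longrightarrow> y \<in> H"
begin

lemma one_not_mem: "1 \<notin> H"
proof
  assume "1 \<in> H"
  then have "k \<in> H" for k
  proof (induction k)
    case (Suc k)
    then show ?case using add_mem[of 1 k] by simp
  qed (rule zero_mem)
  with frobenius_not_mem show False by blast
qed

lemma frobenius_pos: "0 < F"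
  using frobenius_not_mem zero_mem by (cases F) auto

lemma conductor_subset_sgring: "ord_ge (int F + 1) \<subseteq> (sgring H :: 'a::field fls set)"
proof
  fix x :: "'a fls" assume x: "x \<in> ord_ge (int F + 1)"
  show "x \<in> sgring H"
    unfolding sgring_iff
  proof (intro allI impI)
    fix i assume "x $$ i \<noteq> 0"
    with x have "\<not> i < int F + 1" unfolding ord_ge_def by blast
    then show "0 \<le> i \<and> nat i \<in> H" using mem_if_gt_frobenius by simp
  qed
qed

lemma frac_idealI:
  fixes M :: "'a::field fls set"
  assumes "0 \<in> M" "\<And>x y. x \<in> M \<Longrightarrow> y \<in> M \<Longrightarrow> x + y \<in> M"
    and "\<And>r x. r \<in> sgring H \<Longrightarrow> x \<in> M \<Longrightarrow> r * x \<in> M"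
    and "1 \<in> M" "M \<subseteq> ord_ge 0"
  shows "frac_ideal (sgring H) M"
proof -
  have "fls_X_intpow (int F + 1) * x \<in> sgring H" if "x \<in> M" for x :: "'a fls"
  proof -
    have "fls_X_intpow (int F + 1) * x \<in> ord_ge (int F + 1 + 0)"
      using ord_ge_mult[OF fls_X_intpow_in_ord_ge] that assms(5) by blast
    then show ?thesis using conductor_subset_sgring by auto
  qed
  moreover have "fls_X_intpow (int F + 1) \<in> (sgring H :: 'a fls set)"
    using conductor_subset_sgring fls_X_intpow_in_ord_ge by blast
  ultimately have "\<exists>d\<in>sgring H. d \<noteq> 0 \<and> (\<forall>x\<in>M. d * x \<in> sgring H)"
    by (intro bexI[of _ "fls_X_intpow (int F + 1)"]) (auto simp: fls_shift_eq0_iff)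
  moreover have "\<exists>x\<in>M. x \<noteq> 0" using assms(4) by (intro bexI[of _ 1]) auto
  ultimately show ?thesis
    unfolding frac_ideal_def using assms(1-3) by blast
qed

lemma frac_ideal_sgring_superset:
  assumes "H \<subseteq> H'" "\<And>x y. x \<in> H' \<Longrightarrow> y \<in> H' \<Longrightarrow> x + y \<in> H'"
  shows "frac_ideal (sgring H) (sgring H' :: 'a::field fls set)"
proof (rule frac_idealI)
  show "r * x \<in> sgring H'" if "r \<in> sgring H" "x \<in> sgring H'" for r x :: "'a fls"
    using sgring_mult[OF assms(2)] sgring_mono[OF assms(1)] that by blast
  show "(1 :: 'a fls) \<in> sgring H'"
    using fls_const_in_sgring[of H' 1] zero_mem assms(1) by auto
qed (auto simp: zero_in_sgring sgring_add sgring_subset_pow_series)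

lemma frac_ideal_sgring: "frac_ideal (sgring H) (sgring H :: 'a::field fls set)"
  by (rule frac_ideal_sgring_superset[OF order.refl add_mem])

lemma frac_ideal_subspace:
  assumes "frac_ideal (sgring H) M"
  shows "fls_subspace M"
proof -
  have "0 \<in> M" "\<forall>x\<in>M. \<forall>y\<in>M. x + y \<in> M" "\<forall>r\<in>sgring H. \<forall>x\<in>M. r * x \<in> M"
    using assms unfolding frac_ideal_def by blast+
  with fls_const_in_sgring[OF zero_mem] show ?thesis unfolding fls_subspace_def by blast
qed

lemma frac_ideal_bounded_below:
  fixes M :: "'a::field fls set"
  assumes "frac_ideal (sgring H) M"
  obtains b where "M \<subseteq> ord_ge b"
proof -
  obtain d where d: "d \<in> sgring H" "d \<noteq> 0" "\<And>x. x \<in> M \<Longrightarrow> d * x \<in> sgring H"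
    using assms unfolding frac_ideal_def by blast
  have "M \<subseteq> ord_ge (- fls_subdegree d)"
  proof
    fix x assume "x \<in> M"
    then have "d * x \<in> ord_ge 0" using d(3) sgring_subset_pow_series by blast
    then show "x \<in> ord_ge (- fls_subdegree d)"
      using d(2) by (cases "x = 0") (auto simp: ord_ge_iff_subdegree)
  qed
  then show thesis by (rule that)
qed

lemma conductor_shift_subset:
  fixes M :: "'a::field fls set"
  assumes "\<And>r y. r \<in> sgring H \<Longrightarrow> y \<in> M \<Longrightarrow> r * y \<in> M" "x \<in> M" "x \<noteq> 0"
  shows "ord_ge (fls_subdegree x + (int F + 1)) \<subseteq> M"
proof
  fix q :: "'a fls" assume "q \<in> ord_ge (fls_subdegree x + (int F + 1))"
  then have "q / x \<in> sgring H"
    using divide_in_ord_ge[OF assms(3)] conductor_subset_sgring by blast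
  then have "q / x * x \<in> M" using assms(1,2) by blast
  with assms(3) show "q \<in> M" by simp
qed

lemma colon_sgring:
  fixes M :: "'a::field fls set"
  assumes "frac_ideal (sgring H) M"
  shows "colon M (sgring H) = M"
proof
  show "colon M (sgring H) \<subseteq> M"
    using colonD[of _ M "sgring H" 1] one_in_sgring[OF zero_mem] by auto
  show "M \<subseteq> colon M (sgring H)"
  proof (intro subsetI colonI)
    fix x y assume "x \<in> M" "y \<in> (sgring H :: 'a fls set)"
    then have "y * x \<in> M" using assms unfolding frac_ideal_def by blast
    then show "x * y \<in> M" by (simp add: mult.commute)
  qed
qed

lemma canonical_colon_self:
  fixes w :: "'a::field fls set"
  assumes "canonical_ideal (sgring H) w"
  shows "colon w w = sgring H"
proof -
  have w: "frac_ideal (sgring H) w" using assms unfolding canonical_ideal_def by blast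
  have "colon w (colon w (sgring H)) = sgring H"
    using assms frac_ideal_sgring unfolding canonical_ideal_def by blast
  then show ?thesis using colon_sgring[OF w] by simp
qed

lemma frac_ideal_separating_functional:
  fixes M :: "'a::field fls set"
  assumes "frac_ideal (sgring H) M" "g \<notin> M"
  shows "\<exists>f. (\<forall>q\<in>M. (f * q) $$ e = 0) \<and> (f * g) $$ e \<noteq> 0"
proof -
  obtain b where b: "M \<subseteq> ord_ge b" using frac_ideal_bounded_below[OF assms(1)] by blast
  obtain x where x: "x \<in> M" "x \<noteq> 0" using assms(1) unfolding frac_ideal_def by blast
  have "g \<noteq> 0" using assms unfolding frac_ideal_def by blast
  have module: "\<And>r y. r \<in> sgring H \<Longrightarrow> y \<in> M \<Longrightarrow> r * y \<in> M"
    using assms(1) unfolding frac_ideal_def by blast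
  define b' where "b' = min b (fls_subdegree g)"
  define N where "N = nat (fls_subdegree x + (int F + 1) - b')"
  show ?thesis
  proof (rule exists_coeff_functional_separating)
    show "fls_subspace M" using frac_ideal_subspace[OF assms(1)] .
    show "M \<subseteq> ord_ge b'" using b ord_ge_antimono[of b' b] by (auto simp: b'_def)
    show "g \<in> ord_ge b'" using \<open>g \<noteq> 0\<close> by (simp add: ord_ge_iff_subdegree b'_def)
    show "ord_ge (b' + int N) \<subseteq> M"
    proof (rule order.trans[OF ord_ge_antimono conductor_shift_subset[OF module x]])
      show "fls_subdegree x + (int F + 1) \<le> b' + int N" unfolding N_def by linarith
    qed
  qed fact
qed

definition std_canonical :: "'a::field fls set" where
  "std_canonical = {g. \<forall>h\<in>H. g $$ (int F - int h) = 0}"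

lemma std_canonical_subset_pow_series: "std_canonical \<subseteq> ord_ge 0"
proof (intro subsetI, unfold ord_ge_def, intro CollectI allI impI)
  fix g :: "'a fls" and i :: int
  assume g: "g \<in> std_canonical" and "i < 0"
  then have "nat (int F - i) \<in> H" using mem_if_gt_frobenius by simp
  with g have "g $$ (int F - int (nat (int F - i))) = 0" unfolding std_canonical_def by blast
  with \<open>i < 0\<close> show "g $$ i = 0" by simp
qed

lemma one_in_std_canonical: "1 \<in> std_canonical"
  unfolding std_canonical_def using frobenius_not_mem by auto

lemma mult_in_std_canonical:
  assumes r: "r \<in> sgring H" and g: "g \<in> std_canonical"
  shows "r * g \<in> std_canonical"
  unfolding std_canonical_def
proof (intro CollectI ballI)
  fix h assume h: "h \<in> H"
  have "r $$ j * g $$ (int F - int h - j) = 0" for j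
  proof (cases "r $$ j = 0")
    case False
    then have j: "0 \<le> j" "nat j \<in> H" using r unfolding sgring_iff by blast+
    then have "g $$ (int F - int (h + nat j)) = 0"
      using g add_mem[OF h] unfolding std_canonical_def by blast
    with j show ?thesis by (simp add: algebra_simps)
  qed simp
  then show "(r * g) $$ (int F - int h) = 0"
    unfolding fls_times_nth(2) by (simp add: sum.neutral)
qed

lemma frac_ideal_std_canonical: "frac_ideal (sgring H) (std_canonical :: 'a::field fls set)"
proof (rule frac_idealI)
  show "0 \<in> std_canonical" unfolding std_canonical_def by simp
  show "x + y \<in> std_canonical" if "x \<in> std_canonical" "y \<in> std_canonical" for x y :: "'a fls"
    using that unfolding std_canonical_def by simp
qed (simp_all add: mult_in_std_canonical one_in_std_canonical std_canonical_subset_pow_series)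

lemma colon_std_canonical_iff:
  fixes I :: "'a::field fls set"
  assumes "frac_ideal (sgring H) I"
  shows "x \<in> colon std_canonical I \<longleftrightarrow> (\<forall>y\<in>I. (x * y) $$ int F = 0)"
proof
  assume "x \<in> colon std_canonical I"
  then show "\<forall>y\<in>I. (x * y) $$ int F = 0"
    using zero_mem unfolding colon_def std_canonical_def by force
next
  assume x: "\<forall>y\<in>I. (x * y) $$ int F = 0"
  show "x \<in> colon std_canonical I"
  proof (intro colonI, unfold std_canonical_def, intro CollectI ballI)
    fix y h assume "y \<in> I" "h \<in> H"
    then have "fls_X_intpow (int h) * y \<in> I"
      using assms fls_X_intpow_in_sgring_iff unfolding frac_ideal_def by blast
    with x have "(x * (fls_X_intpow (int h) * y)) $$ int F = 0" by blast
    then show "(x * y) $$ (int F - int h) = 0" by (simp add: mult.left_commute[of x])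
  qed
qed

lemma canonical_ideal_std_canonical: "canonical_ideal (sgring H) (std_canonical :: 'a::field fls set)"
  unfolding canonical_ideal_def
proof (intro conjI allI impI frac_ideal_std_canonical)
  fix I :: "'a fls set" assume I: "frac_ideal (sgring H) I"
  show "colon std_canonical (colon std_canonical I) = I"
  proof
    show "I \<subseteq> colon std_canonical (colon std_canonical I)"
      by (auto intro!: colonI dest: colonD simp: mult.commute)
    show "colon std_canonical (colon std_canonical I) \<subseteq> I"
    proof
      fix g assume g: "g \<in> colon std_canonical (colon std_canonical I)"
      show "g \<in> I"
      proof (rule ccontr)
        assume "g \<notin> I"
        then obtain f where f: "\<forall>q\<in>I. (f * q) $$ int F = 0" "(f * g) $$ int F \<noteq> 0"
          using frac_ideal_separating_functional[OF I] by blast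
        then have "f \<in> colon std_canonical I" using colon_std_canonical_iff[OF I] by blast
        then have "g * f \<in> std_canonical" using g colonD by blast
        then have "(g * f) $$ int F = 0" using zero_mem unfolding std_canonical_def by force
        with f(2) show False by (simp add: mult.commute)
      qed
    qed
  qed
qed

lemma std_canonical_no_linear_term:
  assumes "F - 1 \<in> H"
  shows "std_canonical \<subseteq> sgring {x. x \<noteq> 1}"
proof (intro subsetI, unfold sgring_iff, intro allI impI)
  fix g :: "'a fls" and i assume g: "g \<in> std_canonical" and i: "g $$ i \<noteq> 0"
  then have "0 \<le> i" using std_canonical_subset_pow_series unfolding ord_ge_def by force
  moreover have "g $$ (int F - int (F - 1)) = 0"
    using g assms unfolding std_canonical_def by blast
  then have "i \<noteq> 1" using i frobenius_pos by auto
  ultimately show "0 \<le> i \<and> nat i \<in> {x. x \<noteq> 1}" by auto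
qed

lemma B_of_std_canonical_no_linear_term:
  assumes "F - 1 \<in> H"
  shows "B_of (sgring H) std_canonical \<subseteq> (sgring {x. x \<noteq> 1} :: 'a::field fls set)"
proof (rule B_of_subset)
  show "sgring H \<subseteq> (sgring {x. x \<noteq> 1} :: 'a fls set)"
    using one_not_mem by (intro sgring_mono) auto
  show "\<And>x y. x \<in> sgring {x. x \<noteq> 1} \<Longrightarrow> y \<in> sgring {x. x \<noteq> 1} \<Longrightarrow>
      x * y \<in> (sgring {x. x \<noteq> 1} :: 'a fls set)"
    by (rule sgring_mult) (simp_all add: no_linear_term_add_closed)
  show "std_canonical \<subseteq> (sgring {x. x \<noteq> 1} :: 'a fls set)"
    by (rule std_canonical_no_linear_term[OF assms])
qed (simp_all add: one_in_sgring zero_mem one_in_std_canonical zero_in_sgring sgring_add)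

lemma pred_frobenius_mult_no_linear_term:
  assumes "F - 1 \<in> H" "y \<in> (sgring {x. x \<noteq> 1} :: 'a::field fls set)"
  shows "fls_X_intpow (int (F - 1)) * y \<in> sgring H"
  unfolding sgring_iff
proof (intro allI impI)
  fix i assume "(fls_X_intpow (int (F - 1)) * y) $$ i \<noteq> 0"
  then have "y $$ (i - int (F - 1)) \<noteq> 0" by simp
  then have "0 \<le> i - int (F - 1) \<and> nat (i - int (F - 1)) \<noteq> 1"
    using assms(2) unfolding sgring_iff by blast
  then have "i = int (F - 1) \<or> int F < i" using frobenius_pos by linarith
  then show "0 \<le> i \<and> nat i \<in> H" using assms(1) mem_if_gt_frobenius by auto
qed

lemma not_min_can_conductor:
  assumes "F - 1 \<in> H"
  shows "\<not> min_can_conductor (sgring H :: 'a::field fls set) pow_series"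
proof
  let ?R = "sgring H :: 'a fls set" and ?t = "fls_X_intpow (int (F - 1)) :: 'a fls"
  assume "min_can_conductor ?R pow_series"
  then have b_eq: "b_of ?R std_canonical = conductor ?R pow_series"
    using canonical_ideal_std_canonical unfolding min_can_conductor_def by blast
  have "?t \<in> ?R" using assms by (simp only: fls_X_intpow_in_sgring_iff)
  then have "?t \<in> B_of ?R std_canonical"
    using subset_B_of[of ?R] sgring_mult[OF add_mem] by blast
  moreover have "?t * y \<in> ?R" if "y \<in> B_of ?R std_canonical" for y
    using B_of_std_canonical_no_linear_term[OF assms] that
    by (intro pred_frobenius_mult_no_linear_term[OF assms]) blast
  ultimately have "?t \<in> conductor ?R pow_series" using b_eq unfolding b_of_def by blast
  moreover have "fls_X_intpow 1 \<in> (pow_series :: 'a fls set)"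
    unfolding pow_series_def by simp
  ultimately have "?t * fls_X_intpow 1 \<in> ?R" unfolding conductor_def by blast
  moreover have "?t * fls_X_intpow 1 = fls_X_intpow (int F)"
    unfolding fls_X_intpow_times_fls_X_intpow using frobenius_pos by simp
  ultimately show False using frobenius_not_mem by (simp add: fls_X_intpow_in_sgring_iff)
qed

lemma sgring_mult_ideal_pow:
  "r \<in> sgring H \<Longrightarrow> x \<in> ideal_pow (sgring H) w m \<Longrightarrow> r * x \<in> ideal_pow (sgring H) w m"
proof (induction m arbitrary: x)
  case 0
  then show ?case using sgring_mult[OF add_mem] by simp
next
  case (Suc m)
  then show ?case using fideal_prod_left_mult[of "ideal_pow (sgring H) w m" r x w] by simp
qed

lemma fls_subspace_ideal_pow: "fls_subspace (ideal_pow (sgring H) w m :: 'a::field fls set)"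
  unfolding fls_subspace_def
proof (intro conjI allI ballI impI)
  show "0 \<in> ideal_pow (sgring H) w m"
    by (cases m) (simp_all add: zero_in_sgring zero_in_fideal_prod)
  show "x + y \<in> ideal_pow (sgring H) w m"
    if "x \<in> ideal_pow (sgring H) w m" "y \<in> ideal_pow (sgring H) w m" for x y :: "'a fls"
    using that by (cases m) (simp_all add: sgring_add fideal_prod_add)
  show "fls_const c * x \<in> ideal_pow (sgring H) w m" if "x \<in> ideal_pow (sgring H) w m" for c x
    using sgring_mult_ideal_pow fls_const_in_sgring[OF zero_mem] that by blast
qed

lemma canonical_not_conductor_shift:
  fixes w :: "'a::field fls set"
  assumes "canonical_ideal (sgring H) w" "w \<subseteq> ord_ge s"
  shows "\<not> ord_ge (s + int F) \<subseteq> w"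
proof
  assume sub: "ord_ge (s + int F) \<subseteq> w"
  have "fls_X_intpow (int F) \<in> colon w w"
  proof (rule colonI)
    fix y assume "y \<in> w"
    then have "fls_X_intpow (int F) * y \<in> ord_ge (int F + s)"
      using ord_ge_mult[OF fls_X_intpow_in_ord_ge] assms(2) by blast
    with sub show "fls_X_intpow (int F) * y \<in> w" by (auto simp: add.commute)
  qed
  then have "(fls_X_intpow (int F) :: 'a fls) \<in> sgring H"
    using canonical_colon_self[OF assms(1)] by simp
  with frobenius_not_mem show False by (simp add: fls_X_intpow_in_sgring_iff)
qed

lemma sgring_pred_frobenius_decompose:
  assumes "F - 1 \<notin> H" "q \<in> sgring (H \<union> {F - 1..})"
  shows "q - fls_const (q $$ (int F - 1)) * fls_X_intpow (int F - 1) \<in> sgring (H \<union> {F..})"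
  unfolding sgring_iff
proof (intro allI impI)
  fix i assume i: "(q - fls_const (q $$ (int F - 1)) * fls_X_intpow (int F - 1)) $$ i \<noteq> 0"
  have "i \<noteq> int F - 1"
  proof
    assume "i = int F - 1"
    with i show False by simp
  qed
  moreover from i this have "q $$ i \<noteq> 0" by (auto split: if_splits)
  then have "0 \<le> i" "nat i \<in> H \<union> {F - 1..}" using assms(2) unfolding sgring_iff by blast+
  ultimately show "0 \<le> i \<and> nat i \<in> H \<union> {F..}" by auto
qed

lemma canonical_colon_subdegree_ne:
  fixes w :: "'a::field fls set"
  assumes "canonical_ideal (sgring H) w" "w \<subseteq> ord_ge s"
    and "y \<in> colon w (sgring (H \<union> {F..}))" "y \<noteq> 0"
  shows "fls_subdegree y \<noteq> s"
proof
  assume "fls_subdegree y = s"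
  have "ord_ge (s + int F) \<subseteq> w"
  proof
    fix z :: "'a fls" assume "z \<in> ord_ge (s + int F)"
    then obtain u where "u \<in> ord_ge (int F)" "z = y * u"
      using ord_ge_eq_mult_image[OF assms(4)] \<open>fls_subdegree y = s\<close> by auto
    then show "z \<in> w" using ord_ge_subset_sgring_Un_atLeast colonD[OF assms(3)] by blast
  qed
  with canonical_not_conductor_shift[OF assms(1,2)] show False by blast
qed

lemma canonical_colon_mult_pred_frobenius:
  fixes w :: "'a::field fls set"
  assumes "canonical_ideal (sgring H) w"
    and "g0 \<in> w" "g0 \<noteq> 0" "w \<subseteq> ord_ge (fls_subdegree g0)"
    and no_succ: "\<not> (\<exists>g\<in>w. g \<noteq> 0 \<and> fls_subdegree g = fls_subdegree g0 + 1)"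
    and y: "y \<in> colon w (sgring (H \<union> {F..}))"
  shows "y * fls_X_intpow (int F - 1) \<in> w"
proof (cases "y = 0")
  case True
  then show ?thesis using assms(1) unfolding canonical_ideal_def frac_ideal_def by simp
next
  case False
  define s where "s = fls_subdegree g0"
  have "y \<in> w" using colonD[OF y one_in_sgring] zero_mem by simp
  then have "s \<le> fls_subdegree y" "fls_subdegree y \<noteq> s + 1"
    using assms(4) no_succ False ord_ge_iff_subdegree unfolding s_def by blast+
  moreover have "fls_subdegree y \<noteq> s"
    using canonical_colon_subdegree_ne[OF assms(1,4) y False] unfolding s_def .
  ultimately have "y \<in> ord_ge (s + 2)" using ord_ge_iff_subdegree[OF False] by simp
  then have "y * fls_X_intpow (int F - 1) \<in> ord_ge (s + 2 + (int F - 1))"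
    by (rule ord_ge_mult[OF _ fls_X_intpow_in_ord_ge])
  also have "s + 2 + (int F - 1) = fls_subdegree g0 + (int F + 1)" by (simp add: s_def)
  also have "ord_ge \<dots> \<subseteq> w"
  proof (rule conductor_shift_subset[OF _ assms(2,3)])
    show "r * x \<in> w" if "r \<in> sgring H" "x \<in> w" for r x
      using assms(1) that unfolding canonical_ideal_def frac_ideal_def by blast
  qed
  finally show ?thesis .
qed

lemma colon_sgring_Un_frobenius_subset:
  fixes w :: "'a::field fls set"
  assumes "F - 1 \<notin> H" "canonical_ideal (sgring H) w"
    and "g0 \<in> w" "g0 \<noteq> 0" "w \<subseteq> ord_ge (fls_subdegree g0)"
    and "\<not> (\<exists>g\<in>w. g \<noteq> 0 \<and> fls_subdegree g = fls_subdegree g0 + 1)"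
  shows "colon w (sgring (H \<union> {F..})) \<subseteq> colon w (sgring (H \<union> {F - 1..}))"
proof (intro subsetI colonI)
  fix y q :: "'a fls"
  assume y: "y \<in> colon w (sgring (H \<union> {F..}))" and q: "q \<in> sgring (H \<union> {F - 1..})"
  define r where "r = q - fls_const (q $$ (int F - 1)) * fls_X_intpow (int F - 1)"
  have "y * r \<in> w"
    using colonD[OF y sgring_pred_frobenius_decompose[OF assms(1) q]] unfolding r_def .
  moreover have "fls_subspace w"
    using assms(2) frac_ideal_subspace unfolding canonical_ideal_def by blast
  ultimately have "y * r + fls_const (q $$ (int F - 1)) * (y * fls_X_intpow (int F - 1)) \<in> w"
    using canonical_colon_mult_pred_frobenius[OF assms(2-6) y] fls_subspace_add_const_mult by blast
  then show "y * q \<in> w" by (simp add: r_def algebra_simps)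
qed

lemma canonical_has_subdegree_succ:
  fixes w :: "'a::field fls set"
  assumes "F - 1 \<notin> H" "canonical_ideal (sgring H) w"
    and "g0 \<in> w" "g0 \<noteq> 0" "w \<subseteq> ord_ge (fls_subdegree g0)"
  shows "\<exists>g\<in>w. g \<noteq> 0 \<and> fls_subdegree g = fls_subdegree g0 + 1"
proof (rule ccontr)
  let ?R0 = "sgring (H \<union> {F - 1..}) :: 'a fls set" and ?R1 = "sgring (H \<union> {F..}) :: 'a fls set"
  assume "\<not> (\<exists>g\<in>w. g \<noteq> 0 \<and> fls_subdegree g = fls_subdegree g0 + 1)"
  then have "colon w ?R1 \<subseteq> colon w ?R0"
    by (rule colon_sgring_Un_frobenius_subset[OF assms])
  then have "colon w (colon w ?R0) \<subseteq> colon w (colon w ?R1)"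
    by (rule colon_antimono)
  moreover have "colon w (colon w (sgring (H \<union> {c..}))) = sgring (H \<union> {c..})" for c
    using assms(2) frac_ideal_sgring_superset[OF _ add_closed_Un_atLeast[OF add_mem]]
    unfolding canonical_ideal_def by blast
  ultimately have "?R0 \<subseteq> ?R1" by simp
  moreover have "fls_X_intpow (int (F - 1)) \<in> ?R0" "fls_X_intpow (int (F - 1)) \<notin> ?R1"
    using assms(1) frobenius_pos unfolding fls_X_intpow_in_sgring_iff by auto
  ultimately show False by blast
qed

lemma ideal_pow_eq_ord_ge:
  fixes w :: "'a::field fls set"
  assumes "g0 \<in> w" "g0 \<noteq> 0" "w \<subseteq> ord_ge (fls_subdegree g0)"
    and "g1 \<in> w" "g1 \<noteq> 0" "fls_subdegree g1 = fls_subdegree g0 + 1" and "F \<le> m"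
  shows "ideal_pow (sgring H) w m = ord_ge (int m * fls_subdegree g0)"
proof
  let ?P = "ideal_pow (sgring H) w m" and ?s = "fls_subdegree g0"
  show "?P \<subseteq> ord_ge (int m * ?s)"
    by (rule ideal_pow_subset_ord_ge[OF sgring_subset_pow_series assms(3)])
  have mem: "g0 ^ (m - j) * g1 ^ j \<in> ?P" if "j \<le> m" for j
    using powers_in_ideal_pow[OF one_in_sgring[OF zero_mem] assms(1,4) that] .
  have subdegree: "fls_subdegree (g0 ^ (m - j) * g1 ^ j) = int m * ?s + int j" if "j \<le> m" for j
    using that assms(2,5,6) by (simp add: fls_subdegree_pow algebra_simps)
  \<comment> \<open>these products have every order from m s to m s + F, and the conductor covers the rest\<close>
  show "ord_ge (int m * ?s) \<subseteq> ?P"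
  proof (rule ord_ge_subset_subspace[OF fls_subspace_ideal_pow])
    have "ord_ge (fls_subdegree (g0 ^ m) + (int F + 1)) \<subseteq> ?P"
      by (rule conductor_shift_subset) (use sgring_mult_ideal_pow mem[of 0] assms(2) in auto)
    then show "ord_ge (int m * ?s + int (F + 1)) \<subseteq> ?P"
      by (simp add: fls_subdegree_pow algebra_simps)
    show "\<exists>x\<in>?P. x \<noteq> 0 \<and> fls_subdegree x = int m * ?s + int i" if "i < F + 1" for i
      using that assms(2,5,7) mem[of i] subdegree[of i]
      by (intro bexI[of _ "g0 ^ (m - i) * g1 ^ i"]) auto
  qed
qed

lemma B_of_canonical_eq_pow_series:
  fixes w :: "'a::field fls set"
  assumes "F - 1 \<notin> H" "canonical_ideal (sgring H) w"
  shows "B_of (sgring H) w = pow_series"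
proof
  have fw: "frac_ideal (sgring H) w" using assms(2) unfolding canonical_ideal_def by blast
  obtain b where "w \<subseteq> ord_ge b" using frac_ideal_bounded_below[OF fw] by blast
  moreover obtain x where "x \<in> w" "x \<noteq> 0" using fw unfolding frac_ideal_def by blast
  ultimately obtain g0 where g0: "g0 \<in> w" "g0 \<noteq> 0" "w \<subseteq> ord_ge (fls_subdegree g0)"
    by (rule exists_min_subdegree)
  obtain g1 where g1: "g1 \<in> w" "g1 \<noteq> 0" "fls_subdegree g1 = fls_subdegree g0 + 1"
    using canonical_has_subdegree_succ[OF assms g0] by blast
  let ?P = "ideal_pow (sgring H) w" and ?s = "fls_subdegree g0"
  show "B_of (sgring H) w \<subseteq> pow_series"
  proof
    fix x assume "x \<in> B_of (sgring H) w"
    then obtain k where x: "x \<in> colon (?P k) (?P k)" unfolding B_of_def by blast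
    show "x \<in> pow_series"
    proof (cases "x = 0")
      case False
      have "g0 ^ k \<in> ?P k"
        using powers_in_ideal_pow[OF one_in_sgring[OF zero_mem] g0(1) g0(1), of 0] by simp
      then have "x * g0 ^ k \<in> ord_ge (int k * ?s)"
        using colonD[OF x] ideal_pow_subset_ord_ge[OF sgring_subset_pow_series g0(3)] by blast
      then show ?thesis
        using False g0(2) by (simp add: pow_series_eq_ord_ge ord_ge_iff_subdegree fls_subdegree_pow)
    qed (simp add: pow_series_eq_ord_ge)
  qed
  have "?P F = ord_ge (int F * ?s)" by (rule ideal_pow_eq_ord_ge[OF g0 g1]) simp
  then have "pow_series \<subseteq> colon (?P F) (?P F)"
    using ord_ge_mult[of _ 0] by (auto intro!: colonI simp: pow_series_eq_ord_ge)
  then show "pow_series \<subseteq> B_of (sgring H) w" unfolding B_of_def by blast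
qed

theorem min_can_conductor_iff:
  "min_can_conductor (sgring H :: 'a::field fls set) pow_series \<longleftrightarrow> F - 1 \<notin> H"
proof
  show "F - 1 \<notin> H" if "min_can_conductor (sgring H :: 'a fls set) pow_series"
    using not_min_can_conductor that by blast
  show "min_can_conductor (sgring H :: 'a fls set) pow_series" if "F - 1 \<notin> H"
    unfolding min_can_conductor_def
  proof (intro allI impI)
    fix w :: "'a fls set" assume "canonical_ideal (sgring H) w"
    with that have "B_of (sgring H) w = pow_series" by (rule B_of_canonical_eq_pow_series)
    then show "b_of (sgring H) w = conductor (sgring H) pow_series"
      unfolding b_of_def conductor_def by simp
  qed
qed

end

section \<open>Multiplicity equal to embedding dimension\<close>

lemma le_of_mod_eq:
  fixes x y n :: nat
  assumes "x mod n = y mod n" "x < y + n"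
  shows "x \<le> y"
proof (rule ccontr)
  assume "\<not> x \<le> y"
  then have "n dvd x - y" using assms(1) by (simp add: mod_eq_dvd_iff_nat)
  with \<open>\<not> x \<le> y\<close> have "n \<le> x - y" by (simp add: dvd_imp_le)
  with assms(2) \<open>\<not> x \<le> y\<close> show False by arith
qed

locale max_embedding_dimension =
  fixes H :: "nat set" and n :: nat and a :: "nat \<Rightarrow> nat"
  assumes numerical_semigroup: "numerical_semigroup H"
    and three_le: "3 \<le> n"
    and gen_strict_mono: "strict_mono_on {1..n} a"
    and gen_one: "a 1 = n"
    and min_gens_eq: "min_gens H = a ` {1..n}"
begin

lemma zero_mem: "0 \<in> H" and add_mem: "x \<in> H \<Longrightarrow> y \<in> H \<Longrightarrow> x + y \<in> H"
  using numerical_semigroup unfolding numerical_semigroup_def by auto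

lemma gen_less: "i \<in> {1..n} \<Longrightarrow> j \<in> {1..n} \<Longrightarrow> i < j \<Longrightarrow> a i < a j"
  using gen_strict_mono unfolding strict_mono_on_def by blast

lemma gen_mem: "i \<in> {1..n} \<Longrightarrow> a i \<in> H"
  using min_gens_eq unfolding min_gens_def by blast

lemma mult_mem: "k * n \<in> H"
  using gen_mem[of 1] gen_one three_le by (induction k) (auto simp: zero_mem add_mem)

lemma gen_eq_add_mult:
  assumes "i \<in> {1..n}" "y \<in> H" "a i = y + k * n" "0 < k"
  shows "y = 0"
proof -
  have "a i \<in> min_gens H" using assms(1) min_gens_eq by blast
  moreover have "k * n \<in> H" "k * n \<noteq> 0" using mult_mem assms(4) three_le by auto
  ultimately show ?thesis using assms(2,3) unfolding min_gens_def by blast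
qed

lemma gen_mod_nonzero:
  assumes "i \<in> {2..n}"
  shows "a i mod n \<noteq> 0"
proof
  assume "a i mod n = 0"
  then have "a i = (a i div n) * n" using div_mult_mod_eq[of "a i" n] by simp
  then obtain k where k: "a i = k * n" by blast
  have "n < a i" using gen_less[of 1 i] assms gen_one by auto
  have "2 \<le> k"
  proof (rule ccontr)
    assume "\<not> 2 \<le> k"
    then have "k * n \<le> 1 * n" by (intro mult_le_mono1) simp
    with k \<open>n < a i\<close> show False by simp
  qed
  then obtain k' where "k = Suc k'" "0 < k'" by (cases k) auto
  with k have "a i = k' * n + 1 * n" by simp
  then have "k' * n = 0" using gen_eq_add_mult[of i "k' * n" 1] assms mult_mem by simp
  with \<open>0 < k'\<close> three_le show False by simp
qed

lemma mem_if_mod_zero: "y mod n = 0 \<Longrightarrow> y \<in> H"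
  using div_mult_mod_eq[of y n] mult_mem[of "y div n"] by simp

lemma gen_mod_inj: "inj_on (\<lambda>i. a i mod n) {2..n}"
proof -
  have ne: "a i mod n \<noteq> a j mod n" if ij: "i \<in> {2..n}" "j \<in> {2..n}" "i < j" for i j
  proof
    assume "a i mod n = a j mod n"
    moreover have "a i < a j" using gen_less[of i j] ij by auto
    ultimately have "n dvd a j - a i" using mod_eq_dvd_iff_nat[of "a i" "a j" n] by simp
    then obtain k where "a j - a i = n * k" by (rule dvdE)
    with \<open>a i < a j\<close> have "a j = a i + k * n" "0 < k"
      by (cases "k = 0"; simp add: mult.commute)+
    then have "a i = 0" using gen_eq_add_mult[of j] ij gen_mem[of i] by auto
    with gen_mod_nonzero[OF ij(1)] show False by simp
  qed
  show ?thesis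
  proof (rule inj_onI)
    fix i j assume ij: "i \<in> {2..n}" "j \<in> {2..n}" "a i mod n = a j mod n"
    show "i = j"
      by (rule linorder_cases[of i j]) (use ij ne[of i j] ne[of j i] in auto)
  qed
qed

lemma gen_mod_surj:
  assumes "0 < r" "r < n"
  obtains i where "i \<in> {2..n}" "a i mod n = r"
proof -
  have "(\<lambda>i. a i mod n) ` {2..n} \<subseteq> {1..n - 1}"
    using gen_mod_nonzero three_le by (auto simp: Suc_le_eq less_Suc_eq_le[symmetric])
  moreover have "card ((\<lambda>i. a i mod n) ` {2..n}) = card {1..n - 1}"
    using card_image[OF gen_mod_inj] three_le by simp
  ultimately have "(\<lambda>i. a i mod n) ` {2..n} = {1..n - 1}" by (intro card_subset_eq) simp_all
  moreover have "r \<in> {1..n - 1}" using assms by simp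
  ultimately have "r \<in> (\<lambda>i. a i mod n) ` {2..n}" by simp
  then show thesis using that by blast
qed

text \<open>The generators \<open>a 2, \<dots>, a n\<close> form the Apery set of \<open>H\<close> with respect to \<open>n\<close>.\<close>

lemma mem_iff_ge_gen:
  assumes "i \<in> {2..n}" "y mod n = a i mod n"
  shows "y \<in> H \<longleftrightarrow> a i \<le> y"
proof
  assume "y \<in> H"
  show "a i \<le> y"
  proof (rule ccontr)
    assume "\<not> a i \<le> y"
    then have "n dvd a i - y" using assms(2) mod_eq_dvd_iff_nat[of y "a i" n] by simp
    then obtain k where "a i - y = n * k" by (rule dvdE)
    with \<open>\<not> a i \<le> y\<close> have "a i = y + k * n" "0 < k"
      by (cases "k = 0"; simp add: mult.commute)+
    then have "y = 0" using gen_eq_add_mult[of i] assms(1) \<open>y \<in> H\<close> by auto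
    with assms gen_mod_nonzero show False by simp
  qed
next
  assume "a i \<le> y"
  then have "n dvd y - a i" using assms(2) mod_eq_dvd_iff_nat[of "a i" y n] by simp
  then obtain k where "y - a i = n * k" by (rule dvdE)
  with \<open>a i \<le> y\<close> have "y = a i + k * n" by (simp add: mult.commute)
  then show "y \<in> H" using add_mem gen_mem mult_mem assms(1) by auto
qed

lemma gen_max_gt: "n + 1 < a n"
  using gen_less[of 2 n] gen_less[of 1 2] gen_one three_le by auto

lemma gen_mod_eq_sub_mult: "i \<in> {2..n} \<Longrightarrow> (a i - n) mod n = a i mod n"
  using le_mod_geq[of n "a i"] gen_less[of 1 i] gen_one by simp

sublocale frobenius H "a n - n"
proof
  show "0 \<in> H" "\<And>x y. x \<in> H \<Longrightarrow> y \<in> H \<Longrightarrow> x + y \<in> H" by (fact zero_mem add_mem)+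
  have n: "n \<in> {2..n}" using three_le by simp
  show "a n - n \<notin> H"
    using mem_iff_ge_gen[OF n gen_mod_eq_sub_mult[OF n]] gen_max_gt three_le by simp
  fix y assume y: "a n - n < y"
  show "y \<in> H"
  proof (cases "y mod n = 0")
    case False
    moreover have "y mod n < n" using three_le by simp
    ultimately obtain i where i: "i \<in> {2..n}" "a i mod n = y mod n"
      using gen_mod_surj[of "y mod n"] by auto
    have "a i \<le> a n" using gen_less[of i n] i(1) by (cases "i = n") auto
    then have "a i \<le> y" using le_of_mod_eq[OF i(2)] y by linarith
    then show ?thesis using mem_iff_ge_gen[OF i(1) i(2)[symmetric]] by simp
  qed (rule mem_if_mod_zero)
qed

lemma pred_frobenius_mem_iff: "a n - n - 1 \<in> H \<longleftrightarrow> a n \<noteq> a (n - 1) + 1"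
proof
  have m: "n - 1 \<in> {2..n}" using three_le by auto
  assume mem: "a n - n - 1 \<in> H"
  show "a n \<noteq> a (n - 1) + 1"
  proof
    assume "a n = a (n - 1) + 1"
    then have "a (n - 1) - n \<in> H" using mem by simp
    moreover have "n < a (n - 1)" using gen_less[of 1 "n - 1"] gen_one m by simp
    ultimately show False using mem_iff_ge_gen[OF m gen_mod_eq_sub_mult[OF m]] three_le by simp
  qed
next
  assume ne: "a n \<noteq> a (n - 1) + 1"
  show "a n - n - 1 \<in> H"
  proof (cases "(a n - n - 1) mod n = 0")
    case False
    moreover have "(a n - n - 1) mod n < n" using three_le by simp
    ultimately obtain i where i: "i \<in> {2..n}" "a i mod n = (a n - n - 1) mod n"
      using gen_mod_surj[of "(a n - n - 1) mod n"] by auto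
    have "i \<noteq> n"
    proof
      assume "i = n"
      then have "a n mod n = (a n - 1) mod n"
        using i(2) le_mod_geq[of n "a n - 1"] gen_max_gt by (simp add: add.commute)
      then have "n dvd a n - (a n - 1)" using mod_eq_dvd_iff_nat[of "a n - 1" "a n" n] by simp
      with gen_max_gt three_le show False by simp
    qed
    have "a i \<le> a (n - 1)"
    proof (cases "i = n - 1")
      case False
      with \<open>i \<noteq> n\<close> i(1) have "i < n - 1" by auto
      then show ?thesis using gen_less[of i "n - 1"] i(1) by auto
    qed simp
    moreover have "a (n - 1) < a n" using gen_less[of "n - 1" n] three_le by auto
    ultimately have "a i < a n - n - 1 + n" using ne gen_max_gt by linarith
    then have "a i \<le> a n - n - 1" by (rule le_of_mod_eq[OF i(2)])
    then show ?thesis using mem_iff_ge_gen[OF i(1) i(2)[symmetric]] by simp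
  qed (rule mem_if_mod_zero)
qed

end

theorem corollary3p2:
  fixes H :: "nat set" and n :: nat and a :: "nat \<Rightarrow> nat"
  assumes "numerical_semigroup H"
    and "n \<ge> 3"
    and "strict_mono_on {1..n} a"
    and "a 1 = n"
    and "min_gens H = a ` {1..n}"
  shows "min_can_conductor (sgring H :: 'k::field fls set) pow_series \<longleftrightarrow> a n = a (n - 1) + 1"
proof -
  interpret max_embedding_dimension H n a
    by unfold_locales (fact assms)+
  show ?thesis using min_can_conductor_iff pred_frobenius_mem_iff by simp
qed

end
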